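(* There is a surjective morphism of operads $\mathrm{FMan}\twoheadrightarrow \mathrm{gr}_F\,\mathrm{PreLie}$ sending $-\circ-$ and $[-,-]$ to the cosets of the symmetrised pre-Lie product and of the pre-Lie bracket, respectively.
   Context: All operads are symmetric, reduced and connected, over a field $\mathbb{k}$ of characteristic zero. The operad $\mathrm{PreLie}$ is generated by one binary operation $a_1\cdot a_2$ with no symmetry, subject to $(a_1\cdot a_2)\cdot a_3 - a_1\cdot (a_2\cdot a_3) = (a_1\cdot a_3)\cdot a_2- a_1\cdot (a_3\cdot a_2)$. Put $a_1\circ a_2=a_1\cdot a_2+a_2\cdot a_1$ and $[a_1,a_2]=a_1\cdot a_2-a_2\cdot a_1$. The Lie filtration $F^\bullet\mathrm{PreLie}$ is the filtration by powers of the operadic ideal generated by $[-,-]$ (so $F^k\mathrm{PreLie}$ is spanned by tree composites of $\circ$ and $[-,-]$ with at least $k$ vertices labelled by $[-,-]$), and $\mathrm{gr}_F\mathrm{PreLie}$ is the associated graded operad. The operad $\mathrm{FMan}$ is generated by a symmetric binary operation $-\circ-$ and a skew-symmetric binary operation $[-,-]$ subject to associativity of $\circ$, the Jacobi identity for $[-,-]$, and the Hertling--Manin relation \begin{multline*} [a_1\circ a_2,a_3\circ a_4]= [a_1\circ a_2, a_3]\circ a_4+[a_1\circ a_2, a_4]\circ a_3+a_1\circ [a_2, a_3\circ a_4]+a_2\circ [a_1, a_3\circ a_4]-\\ (a_1\circ a_3)\circ[a_2,a_4]-(a_2\circ a_3)\circ[a_1,a_4]-(a_2\circ a_4)\circ[a_1,a_3]-(a_1\circ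 a_4)\circ[a_2,a_3] . \end{multline*} *)

theory Defs
  imports Main "HOL-Library.Function_Algebras"
begin

text \<open>Binary trees with labelled leaves are the nonassociative
monomials in the variables x_1, x_2, ...; a node Node a b is the product a.b.
Elements of the free magma algebra over the field 'k are finitely supported
functions tree => 'k (all elements we construct are finitely supported).\<close>

datatype tree = Leaf nat | Node tree tree

definition mono :: "tree \<Rightarrow> tree \<Rightarrow> 'k::field" where
  "mono t = (\<lambda>s. if s = t then 1 else 0)"

definition scl :: "'k::field \<Rightarrow> (tree \<Rightarrow> 'k) \<Rightarrow> tree \<Rightarrow> 'k" where
  "scl c f = (\<lambda>t. c * f t)"

definition mult :: "(tree \<Rightarrow> 'k::field) \<Rightarrow> (tree \<Rightarrow> 'k) \<Rightarrow> tree \<Rightarrow> 'k" where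
  "mult f g = (\<lambda>t. case t of Leaf _ \<Rightarrow> 0 | Node a b \<Rightarrow> f a * g b)"

definition lspan :: "(tree \<Rightarrow> 'k::field) set \<Rightarrow> (tree \<Rightarrow> 'k) set" where
  "lspan S = {x. \<exists>F c. finite F \<and> F \<subseteq> S \<and> x = (\<Sum>v\<in>F. scl (c v) v)}"

definition circ :: "(tree \<Rightarrow> 'k::field) \<Rightarrow> (tree \<Rightarrow> 'k) \<Rightarrow> tree \<Rightarrow> 'k" where
  "circ f g = mult f g + mult g f"

definition br :: "(tree \<Rightarrow> 'k::field) \<Rightarrow> (tree \<Rightarrow> 'k) \<Rightarrow> tree \<Rightarrow> 'k" where
  "br f g = mult f g - mult g f"

text \<open>The free pre-Lie algebra is the free magma algebra modulo lspan PLI.\<close>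
inductive_set PLI :: "(tree \<Rightarrow> 'k::field) set" where
  gen: "mult (mult (mono u) (mono v)) (mono w) - mult (mono u) (mult (mono v) (mono w))
        - (mult (mult (mono u) (mono w)) (mono v) - mult (mono u) (mult (mono w) (mono v))) \<in> PLI"
| left: "x \<in> PLI \<Longrightarrow> mult (mono t) x \<in> PLI"
| right: "x \<in> PLI \<Longrightarrow> mult x (mono t) \<in> PLI"

text \<open>Tree composites of circ and the bracket (elements of the free operad on a symmetric
and a skew-symmetric generator), with number of bracket vertices and evaluation.\<close>
datatype ctree = CVar nat | CCirc ctree ctree | CBr ctree ctree

fun nbr :: "ctree \<Rightarrow> nat" where
  "nbr (CVar _) = 0"
| "nbr (CCirc a b) = nbr a + nbr b"
| "nbr (CBr a b) = Suc (nbr a + nbr b)"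

fun ev :: "ctree \<Rightarrow> tree \<Rightarrow> 'k::field" where
  "ev (CVar i) = mono (Leaf i)"
| "ev (CCirc a b) = circ (ev a) (ev b)"
| "ev (CBr a b) = br (ev a) (ev b)"

text \<open>Lie filtration F^k PreLie (lifted to the free magma algebra): spanned by tree
composites with at least k bracket vertices, modulo the pre-Lie identities.\<close>
definition Filt :: "nat \<Rightarrow> (tree \<Rightarrow> 'k::field) set" where
  "Filt k = lspan (PLI \<union> {ev T | T. k \<le> nbr T})"

text \<open>Defining relations of FMan.\<close>
definition rel_csym :: "(tree \<Rightarrow> 'k::field) \<Rightarrow> (tree \<Rightarrow> 'k) \<Rightarrow> tree \<Rightarrow> 'k" where
  "rel_csym a b = circ a b - circ b a"

definition rel_bskew :: "(tree \<Rightarrow> 'k::field) \<Rightarrow> (tree \<Rightarrow> 'k) \<Rightarrow> tree \<Rightarrow> 'k" where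
  "rel_bskew a b = br a b + br b a"

definition rel_assoc :: "(tree \<Rightarrow> 'k::field) \<Rightarrow> (tree \<Rightarrow> 'k) \<Rightarrow> (tree \<Rightarrow> 'k) \<Rightarrow> tree \<Rightarrow> 'k" where
  "rel_assoc a b c = circ (circ a b) c - circ a (circ b c)"

definition rel_jacobi :: "(tree \<Rightarrow> 'k::field) \<Rightarrow> (tree \<Rightarrow> 'k) \<Rightarrow> (tree \<Rightarrow> 'k) \<Rightarrow> tree \<Rightarrow> 'k" where
  "rel_jacobi a b c = br (br a b) c + br (br b c) a + br (br c a) b"

definition rel_hm :: "(tree \<Rightarrow> 'k::field) \<Rightarrow> (tree \<Rightarrow> 'k) \<Rightarrow> (tree \<Rightarrow> 'k) \<Rightarrow> (tree \<Rightarrow> 'k) \<Rightarrow> tree \<Rightarrow> 'k" where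
  "rel_hm a1 a2 a3 a4 =
     br (circ a1 a2) (circ a3 a4)
     - (circ (br (circ a1 a2) a3) a4 + circ (br (circ a1 a2) a4) a3
        + circ a1 (br a2 (circ a3 a4)) + circ a2 (br a1 (circ a3 a4))
        - circ (circ a1 a3) (br a2 a4) - circ (circ a2 a3) (br a1 a4)
        - circ (circ a2 a4) (br a1 a3) - circ (circ a1 a4) (br a2 a3))"

text \<open>Image, under the canonical map from the free operad (circ/bracket trees evaluated
in PreLie), of the operadic ideal of FMan relations, as weight-homogeneous generators:
(w, x) means x is a weight-w element (w = number of bracket vertices).\<close>
inductive_set FMI :: "(nat \<times> (tree \<Rightarrow> 'k::field)) set" where
  csym: "(nbr A + nbr B, rel_csym (ev A) (ev B)) \<in> FMI"
| bskew: "(Suc (nbr A + nbr B), rel_bskew (ev A) (ev B)) \<in> FMI"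
| assoc: "(nbr A + nbr B + nbr C, rel_assoc (ev A) (ev B) (ev C)) \<in> FMI"
| jacobi: "(2 + nbr A + nbr B + nbr C, rel_jacobi (ev A) (ev B) (ev C)) \<in> FMI"
| hm: "(1 + nbr A + nbr B + nbr C + nbr D, rel_hm (ev A) (ev B) (ev C) (ev D)) \<in> FMI"
| circ_l: "(w, x) \<in> FMI \<Longrightarrow> (w + nbr T, circ x (ev T)) \<in> FMI"
| circ_r: "(w, x) \<in> FMI \<Longrightarrow> (w + nbr T, circ (ev T) x) \<in> FMI"
| br_l: "(w, x) \<in> FMI \<Longrightarrow> (Suc (w + nbr T), br x (ev T)) \<in> FMI"
| br_r: "(w, x) \<in> FMI \<Longrightarrow> (Suc (w + nbr T), br (ev T) x) \<in> FMI"

text \<open>The map from the free operad to gr_F PreLie sending a tree T to the class of ev T in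
F^(nbr T)/F^(nbr T + 1) descends to FMan iff every weight-w ideal generator lies in F^(w+1).\<close>
definition descends_to_FMan :: "'k::field itself \<Rightarrow> bool" where
  "descends_to_FMan _ \<longleftrightarrow> (\<forall>(w, x) \<in> (FMI :: (nat \<times> (tree \<Rightarrow> 'k)) set). x \<in> Filt (Suc w))"

text \<open>The induced map is surjective: each F^k/F^(k+1) is spanned by the classes of
tree composites with exactly k bracket vertices.\<close>
definition gr_surjective :: "'k::field itself \<Rightarrow> bool" where
  "gr_surjective _ \<longleftrightarrow> (\<forall>k. (Filt k :: (tree \<Rightarrow> 'k) set) \<subseteq> lspan ({ev T | T. nbr T = k} \<union> Filt (Suc k)))"

end

theory Submission
  imports Defs "HOL.Modules"
begin

text \<open>Work in the free magma algebra, where PreLie is the quotient by the span of the pre-Lie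
relators. Every FMan relation of bracket weight w, evaluated there, is an explicit combination
of pre-Lie relators (composed with monomials) and of circ/bracket composites with more than w
brackets; so it lies in F^(w+1), and since composing with a tree T raises the filtration degree
by the number of brackets of T, the whole operadic ideal of FMan maps to the next filtration
step. Surjectivity is immediate because F^k is spanned by composites with at least k brackets,
and those with more than k lie in F^(k+1). No division occurs, so the argument works over any
field.\<close>

interpretation alg: module "scl :: 'k::field \<Rightarrow> (tree \<Rightarrow> 'k) \<Rightarrow> tree \<Rightarrow> 'k"
  by standard (simp_all add: scl_def fun_eq_iff algebra_simps)

lemma lspan_eq_span: "lspan S = alg.span S"
  by (auto simp: lspan_def alg.span_explicit)

lemma linear_map_span_into:
  assumes L: "module_hom scl scl L" and V: "alg.subspace V" and x: "x \<in> alg.span S"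
    and S: "\<And>s. s \<in> S \<Longrightarrow> L s \<in> V"
  shows "L x \<in> V"
  using alg.span_subspace_induct[OF x module_hom.subspace_vimage[OF L V]] S by blast

lemma mult_linear_left: "module_hom scl scl (\<lambda>f. mult f g)"
  by (simp add: module_hom_iff alg.module_axioms fun_eq_iff mult_def scl_def algebra_simps
      split: tree.split)

lemma mult_linear_right: "module_hom scl scl (mult f)"
  by (simp add: module_hom_iff alg.module_axioms fun_eq_iff mult_def scl_def algebra_simps
      split: tree.split)

lemma mult_span_into:
  assumes V: "alg.subspace V" and x: "x \<in> alg.span A" and y: "y \<in> alg.span B"
    and AB: "\<And>a b. a \<in> A \<Longrightarrow> b \<in> B \<Longrightarrow> mult a b \<in> V"
  shows "mult x y \<in> V"
proof (rule linear_map_span_into[OF mult_linear_left V x])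
  fix a assume "a \<in> A"
  then show "mult a y \<in> V"
    using linear_map_span_into[OF mult_linear_right V y] AB by blast
qed

text \<open>The free magma algebra proper. The function space also contains infinite formal sums,
on which the ideal property of PLI (stated only for monomial factors) gives no control.\<close>

definition polys :: "(tree \<Rightarrow> 'k::field) set" where
  "polys = alg.span (range mono)"

lemma mult_mono_mono: "mult (mono a) (mono b) = mono (Node a b)"
  by (simp add: fun_eq_iff mult_def mono_def split: tree.split)

lemma mult_polys: "f \<in> polys \<Longrightarrow> g \<in> polys \<Longrightarrow> mult f g \<in> polys"
  unfolding polys_def
  by (rule mult_span_into[OF alg.subspace_span]) (auto simp: mult_mono_mono intro: alg.span_base)

lemma ev_polys: "ev T \<in> polys"
proof (induction T)
  case (CVar i)
  show ?case by (simp add: polys_def alg.span_base)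
next
  case (CCirc A B)
  then show ?case
    unfolding ev.simps circ_def by (intro alg.span_add[of _ "range mono", folded polys_def] mult_polys)
next
  case (CBr A B)
  then show ?case
    unfolding ev.simps br_def by (intro alg.span_diff[of _ "range mono", folded polys_def] mult_polys)
qed

definition rel_prelie :: "(tree \<Rightarrow> 'k::field) \<Rightarrow> (tree \<Rightarrow> 'k) \<Rightarrow> (tree \<Rightarrow> 'k) \<Rightarrow> tree \<Rightarrow> 'k" where
  "rel_prelie f g h = mult (mult f g) h - mult f (mult g h) - (mult (mult f h) g - mult f (mult h g))"

lemma rel_prelie_linear:
  "module_hom scl scl (\<lambda>f. rel_prelie f g h)"
  "module_hom scl scl (\<lambda>g. rel_prelie f g h)"
  "module_hom scl scl (\<lambda>h. rel_prelie f g h)"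
  by (simp_all add: module_hom_iff alg.module_axioms fun_eq_iff rel_prelie_def mult_def scl_def
      algebra_simps split: tree.split)

lemma rel_prelie_in_span_PLI:
  assumes f: "f \<in> polys" and g: "g \<in> polys" and h: "h \<in> polys"
  shows "rel_prelie f g h \<in> alg.span PLI"
proof -
  have "rel_prelie (mono u) (mono v) (mono w) \<in> alg.span PLI" for u v w
    by (rule alg.span_base) (simp add: rel_prelie_def PLI.gen)
  then have "rel_prelie (mono u) (mono v) h \<in> alg.span PLI" for u v
    using linear_map_span_into[OF rel_prelie_linear(3) alg.subspace_span h[unfolded polys_def]] by blast
  then have "rel_prelie (mono u) g h \<in> alg.span PLI" for u
    using linear_map_span_into[OF rel_prelie_linear(2) alg.subspace_span g[unfolded polys_def]] by blast
  then show ?thesis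
    using linear_map_span_into[OF rel_prelie_linear(1) alg.subspace_span f[unfolded polys_def]] by blast
qed

lemma mult_left_span_PLI: "g \<in> polys \<Longrightarrow> p \<in> alg.span PLI \<Longrightarrow> mult g p \<in> alg.span PLI"
  unfolding polys_def
  by (rule mult_span_into[OF alg.subspace_span]) (auto intro: alg.span_base PLI.left)

lemma mult_right_span_PLI: "g \<in> polys \<Longrightarrow> p \<in> alg.span PLI \<Longrightarrow> mult p g \<in> alg.span PLI"
  unfolding polys_def
  by (rule mult_span_into[OF alg.subspace_span]) (auto intro: alg.span_base PLI.right)

lemma rel_csym_eq_0: "rel_csym a b = 0"
  by (simp add: rel_csym_def circ_def)

lemma rel_bskew_eq_0: "rel_bskew a b = 0"
  by (simp add: rel_bskew_def br_def)

lemma rel_assoc_expansion: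
  "rel_assoc a b c =
    circ a (br b c) - br a (circ b c) + br a (br b c) - br (circ a b) c + circ (br a b) c
    - br (br a b) c + scl 2 (circ (br a c) b) + scl 2 (rel_prelie a b c)
    + scl 2 (rel_prelie b a c) + scl 2 (rel_prelie c a b)"
  unfolding rel_assoc_def rel_prelie_def circ_def br_def
  by (simp add: fun_eq_iff mult_def scl_def split: tree.split) (simp add: algebra_simps)

lemma rel_jacobi_expansion:
  "rel_jacobi a b c = rel_prelie a b c - rel_prelie b a c + rel_prelie c a b"
  unfolding rel_jacobi_def rel_prelie_def circ_def br_def
  by (simp add: fun_eq_iff mult_def scl_def split: tree.split) (simp add: algebra_simps)

lemma rel_hm_expansion:
  "rel_hm a b c d =
    br a (br b (circ c d)) - circ a (br b (br c d)) - br a (br b (br c d))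
    - scl 2 (circ a (br (br b d) c)) - scl 2 (br a (br (br b d) c)) - br (circ a b) (br c d)
    - br (br a b) (circ c d) - br (br a b) (br c d) - br (circ a c) (br b d)
    + br (br a c) (circ b d) + scl 2 (br (br a c) (br b d)) - br (circ a d) (br b c)
    + br (br a d) (circ b c) + scl 2 (br (br a d) (br b c)) + br (br (circ a b) c) d
    + circ (br (br a b) c) d + br (br (br a b) c) d - scl 2 (circ (br (br a c) b) d)
    - scl 2 (br (br (br a c) b) d) - br (br (circ a b) d) c + circ (br (br a b) d) c
    - br (br (br a b) d) c - scl 2 (circ (br (br a d) b) c) - scl 2 (br (br (br a d) b) c)
    + br (br a (circ c d)) b + circ (br a (br c d)) b + br (br a (br c d)) b
    - scl 2 (circ (br (br a c) d) b) + scl 2 (br (br (br a c) d) b)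
    + scl 4 (br (br (br a d) c) b) - scl 4 (rel_prelie (mult a b) c d)
    + scl 4 (rel_prelie (mult a c) b d) - scl 4 (rel_prelie (mult c a) b d)
    - scl 4 (rel_prelie (mult d a) b c) - scl 4 (rel_prelie a (mult b d) c)
    + scl 4 (rel_prelie a (mult d b) c) + scl 4 (rel_prelie a b (mult d c))
    - scl 4 (rel_prelie b (mult a c) d) + scl 4 (rel_prelie b (mult c a) d)
    - scl 4 (rel_prelie b (mult a d) c) + scl 4 (rel_prelie b (mult d a) c)
    + scl 4 (rel_prelie c (mult a b) d) + scl 4 (mult (rel_prelie a c d) b)
    - scl 4 (mult (rel_prelie c a d) b) - scl 4 (mult (rel_prelie a b d) c)"
  unfolding rel_hm_def rel_prelie_def circ_def br_def
  by (simp add: fun_eq_iff mult_def scl_def split: tree.split) (simp add: algebra_simps)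

lemma Filt_eq_span: "Filt k = alg.span (PLI \<union> {ev T |T. k \<le> nbr T})"
  by (simp add: Filt_def lspan_eq_span)

lemma subspace_Filt: "alg.subspace (Filt k)"
  by (simp add: Filt_eq_span)

lemmas Filt_closed =
  alg.subspace_add[OF subspace_Filt] alg.subspace_diff[OF subspace_Filt]
  alg.subspace_scale[OF subspace_Filt] alg.subspace_neg[OF subspace_Filt]

lemma span_PLI_in_Filt: "p \<in> alg.span PLI \<Longrightarrow> p \<in> Filt k"
  unfolding Filt_eq_span using alg.span_mono[of PLI] by blast

lemma ev_in_Filt: "k \<le> nbr T \<Longrightarrow> ev T \<in> Filt k"
  unfolding Filt_eq_span by (rule alg.span_base) blast

lemma linear_map_Filt_into:
  assumes L: "module_hom scl scl L" and x: "x \<in> Filt k"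
    and PLI: "\<And>p. p \<in> alg.span PLI \<Longrightarrow> L p \<in> alg.span PLI"
    and ev: "\<And>S. k \<le> nbr S \<Longrightarrow> L (ev S) \<in> Filt m"
  shows "L x \<in> Filt m"
  using x unfolding Filt_eq_span[of k]
  by (rule linear_map_span_into[OF L subspace_Filt])
    (auto intro: span_PLI_in_Filt PLI alg.span_base ev)

lemma circ_br_linear:
  "module_hom scl scl (\<lambda>x. circ x e)" "module_hom scl scl (circ e)"
  "module_hom scl scl (\<lambda>x. br x e)" "module_hom scl scl (br e)"
  by (simp_all add: module_hom_iff alg.module_axioms fun_eq_iff circ_def br_def mult_def scl_def
      algebra_simps split: tree.split)

lemma circ_br_span_PLI:
  assumes "p \<in> alg.span PLI" and "e \<in> polys"
  shows "circ p e \<in> alg.span PLI" "circ e p \<in> alg.span PLI"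
    "br p e \<in> alg.span PLI" "br e p \<in> alg.span PLI"
  unfolding circ_def br_def using assms
  by (blast intro: alg.span_add alg.span_diff mult_left_span_PLI mult_right_span_PLI)+

lemma circ_br_ev_Filt:
  assumes x: "x \<in> Filt k"
  shows "circ x (ev T) \<in> Filt (k + nbr T)" "circ (ev T) x \<in> Filt (k + nbr T)"
    "br x (ev T) \<in> Filt (Suc (k + nbr T))" "br (ev T) x \<in> Filt (Suc (k + nbr T))"
proof -
  have ev: "circ (ev S) (ev T) \<in> Filt (k + nbr T)" "circ (ev T) (ev S) \<in> Filt (k + nbr T)"
    "br (ev S) (ev T) \<in> Filt (Suc (k + nbr T))" "br (ev T) (ev S) \<in> Filt (Suc (k + nbr T))"
    if "k \<le> nbr S" for S
    unfolding ev.simps[symmetric] using that by (intro ev_in_Filt; simp)+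
  show "circ x (ev T) \<in> Filt (k + nbr T)"
    by (rule linear_map_Filt_into[OF circ_br_linear(1) x]) (simp_all add: circ_br_span_PLI ev_polys ev)
  show "circ (ev T) x \<in> Filt (k + nbr T)"
    by (rule linear_map_Filt_into[OF circ_br_linear(2) x]) (simp_all add: circ_br_span_PLI ev_polys ev)
  show "br x (ev T) \<in> Filt (Suc (k + nbr T))"
    by (rule linear_map_Filt_into[OF circ_br_linear(3) x]) (simp_all add: circ_br_span_PLI ev_polys ev)
  show "br (ev T) x \<in> Filt (Suc (k + nbr T))"
    by (rule linear_map_Filt_into[OF circ_br_linear(4) x]) (simp_all add: circ_br_span_PLI ev_polys ev)
qed

lemma FMI_in_Filt: "(w, x) \<in> FMI \<Longrightarrow> x \<in> Filt (Suc w)"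
proof (induction rule: FMI.induct)
  case (csym A B)
  show ?case unfolding rel_csym_eq_0 by (rule alg.subspace_0[OF subspace_Filt])
next
  case (bskew A B)
  show ?case unfolding rel_bskew_eq_0 by (rule alg.subspace_0[OF subspace_Filt])
next
  case (assoc A B C)
  show ?case
    unfolding rel_assoc_expansion ev.simps[symmetric]
    by (intro Filt_closed; (rule ev_in_Filt, simp)?)
      (blast intro: span_PLI_in_Filt rel_prelie_in_span_PLI ev_polys)+
next
  case (jacobi A B C)
  show ?case
    unfolding rel_jacobi_expansion
    by (intro Filt_closed span_PLI_in_Filt rel_prelie_in_span_PLI ev_polys)
next
  case (hm A B C D)
  show ?case
    unfolding rel_hm_expansion ev.simps[symmetric]
    by (intro Filt_closed; (rule ev_in_Filt, simp)?)
      (blast intro: span_PLI_in_Filt rel_prelie_in_span_PLI mult_left_span_PLI mult_right_span_PLI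
        mult_polys ev_polys)+
next
  case (circ_l w x T)
  then show ?case using circ_br_ev_Filt(1)[of x "Suc w" T] by simp
next
  case (circ_r w x T)
  then show ?case using circ_br_ev_Filt(2)[of x "Suc w" T] by simp
next
  case (br_l w x T)
  then show ?case using circ_br_ev_Filt(3)[of x "Suc w" T] by simp
next
  case (br_r w x T)
  then show ?case using circ_br_ev_Filt(4)[of x "Suc w" T] by simp
qed

lemma Filt_subset_span_graded: "Filt k \<subseteq> alg.span ({ev T |T. nbr T = k} \<union> Filt (Suc k))"
proof -
  have "PLI \<subseteq> Filt (Suc k)"
    using span_PLI_in_Filt alg.span_base by blast
  moreover have "ev T \<in> {ev T |T. nbr T = k} \<union> Filt (Suc k)" if "k \<le> nbr T" for T
    using that ev_in_Filt[of "Suc k" T] by (cases "nbr T = k") auto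
  ultimately have "PLI \<union> {ev T |T. k \<le> nbr T} \<subseteq> {ev T |T. nbr T = k} \<union> Filt (Suc k)"
    by blast
  then show ?thesis
    unfolding Filt_eq_span[of k] by (rule alg.span_mono)
qed

theorem lemma4:
  shows "descends_to_FMan TYPE('k::field_char_0) \<and> gr_surjective TYPE('k::field_char_0)"
  unfolding descends_to_FMan_def gr_surjective_def lspan_eq_span
  using FMI_in_Filt Filt_subset_span_graded by blast

end
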